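(* Let $I \subset S=K[x_1,\ldots,x_n]$ be a monomial ideal ($K$ a field). Then the following are equivalent: (1) $I$ is componentwise polymatroidal. (2) For all monomials $u,v \in I$ with $\deg(u)\leq \deg(v)$ and $u \nmid v$, and for every $i$ with $\deg_{x_i}(v) > \deg_{x_i}(u)$, there exists $j$ with $\deg_{x_j}(v)< \deg_{x_j}(u)$ and $x_j(v/x_i) \in I$.
   Context: For a monomial $u$, $\deg_{x_i}(u)$ is the exponent of $x_i$ in $u$. $G(I)$ denotes the minimal set of monomial generators of a monomial ideal $I$. A monomial ideal $I$ generated in a single degree is polymatroidal if for all $u,v\in G(I)$ and all $i$ with $\deg_{x_i}(u)>\deg_{x_i}(v)$ there exists $j$ with $\deg_{x_j}(u)<\deg_{x_j}(v)$ and $x_j(u/x_i)\in I$. For a monomial ideal $I$, its $j$-th graded component $I_{\langle j\rangle}$ is the ideal generated by all monomials of degree $j$ in $I$. $I$ is componentwise polymatroidal if $I_{\langle j\rangle}$ is polymatroidal for every $j$ (for which it is nonzero). *)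

theory Defs
  imports Main
begin

text \<open>Monomials of S = K[x_0,...,x_{n-1}] are represented by exponent vectors
  u :: nat \<Rightarrow> nat with u k = 0 for k \<ge> n; u k is deg_{x_k}(u).
  A monomial ideal is represented by the set of monomials it contains.\<close>

definition monomials :: "nat \<Rightarrow> (nat \<Rightarrow> nat) set" where
  "monomials n = {u. \<forall>k\<ge>n. u k = 0}"

definition mdvd :: "(nat \<Rightarrow> nat) \<Rightarrow> (nat \<Rightarrow> nat) \<Rightarrow> bool" where
  "mdvd u v \<longleftrightarrow> (\<forall>k. u k \<le> v k)"

definition mdeg :: "nat \<Rightarrow> (nat \<Rightarrow> nat) \<Rightarrow> nat" where
  "mdeg n u = (\<Sum>k<n. u k)"

definition monomial_ideal :: "nat \<Rightarrow> (nat \<Rightarrow> nat) set \<Rightarrow> bool" where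
  "monomial_ideal n I \<longleftrightarrow> I \<subseteq> monomials n \<and>
     (\<forall>u\<in>I. \<forall>v\<in>monomials n. mdvd u v \<longrightarrow> v \<in> I)"

definition ideal_gen :: "nat \<Rightarrow> (nat \<Rightarrow> nat) set \<Rightarrow> (nat \<Rightarrow> nat) set" where
  "ideal_gen n A = {v \<in> monomials n. \<exists>u\<in>A. mdvd u v}"

definition mgens :: "(nat \<Rightarrow> nat) set \<Rightarrow> (nat \<Rightarrow> nat) set" where
  "mgens I = {u \<in> I. \<forall>w\<in>I. mdvd w u \<longrightarrow> w = u}"

definition mexch :: "(nat \<Rightarrow> nat) \<Rightarrow> nat \<Rightarrow> nat \<Rightarrow> (nat \<Rightarrow> nat)" where
  "mexch u i j = (\<lambda>k. u k - (if k = i then 1 else 0) + (if k = j then 1 else 0))"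

definition component :: "nat \<Rightarrow> (nat \<Rightarrow> nat) set \<Rightarrow> nat \<Rightarrow> (nat \<Rightarrow> nat) set" where
  "component n I d = ideal_gen n {u \<in> I. mdeg n u = d}"

definition polymatroidal :: "nat \<Rightarrow> (nat \<Rightarrow> nat) set \<Rightarrow> bool" where
  "polymatroidal n I \<longleftrightarrow>
     (\<exists>d. \<forall>u\<in>mgens I. mdeg n u = d) \<and>
     (\<forall>u\<in>mgens I. \<forall>v\<in>mgens I. \<forall>i<n. u i > v i \<longrightarrow>
        (\<exists>j<n. u j < v j \<and> mexch u i j \<in> I))"

definition componentwise_polymatroidal :: "nat \<Rightarrow> (nat \<Rightarrow> nat) set \<Rightarrow> bool" where
  "componentwise_polymatroidal n I \<longleftrightarrow>
     (\<forall>d. component n I d \<noteq> {} \<longrightarrow> polymatroidal n (component n I d))"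

end

theory Submission
  imports Defs
begin

text \<open>For (1) \<Longrightarrow> (2): given u, v as in (2), choose a multiple w of u with deg w = deg v
  dividing lcm(u, v)/x_i. Then w and v are minimal generators of the same graded component,
  and the polymatroidal exchange of v against w yields an index j with
  v_j < w_j \<le> max(u_j, v_j), hence v_j < u_j.
  For (2) \<Longrightarrow> (1): the minimal generators of I_<d> are exactly the monomials of degree d
  in I, and distinct monomials of equal degree do not divide each other.\<close>

lemma mdeg_mono:
  assumes "mdvd u v"
  shows "mdeg n u \<le> mdeg n v"
  using assms unfolding mdeg_def mdvd_def by (intro sum_mono) auto

lemma mdvd_mdeg_eq_imp_eq:
  assumes "u \<in> monomials n" "v \<in> monomials n" "mdvd u v" "mdeg n u = mdeg n v"
  shows "u = v"
proof
  fix k show "u k = v k"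
  proof (cases "k < n")
    case True
    show ?thesis
    proof (rule ccontr)
      assume "u k \<noteq> v k"
      with assms(3) have "u k < v k" unfolding mdvd_def by (meson le_neq_implies_less)
      hence "(\<Sum>k<n. u k) < (\<Sum>k<n. v k)"
        using assms(3) True by (intro sum_strict_mono_ex1) (auto simp: mdvd_def)
      with assms(4) show False unfolding mdeg_def by simp
    qed
  next
    case False
    thus ?thesis using assms(1,2) by (simp add: monomials_def)
  qed
qed

lemma mdeg_fun_upd_Suc:
  assumes "m < n"
  shows "mdeg n (w(m := Suc (w m))) = Suc (mdeg n w)"
proof -
  have "mdeg n (w(m := Suc (w m))) = (\<Sum>k<n. w k + (if k = m then 1 else 0))"
    unfolding mdeg_def by (intro sum.cong) auto
  also have "\<dots> = mdeg n w + 1" using assms by (simp add: sum.distrib mdeg_def)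
  finally show ?thesis by simp
qed

lemma mdeg_mexch:
  assumes "i < n" "j < n" "v i \<ge> 1"
  shows "mdeg n (mexch v i j) = mdeg n v"
proof -
  have "mdeg n (mexch v i j) + 1 = (\<Sum>k<n. mexch v i j k + (if k = i then 1 else 0))"
    using assms unfolding mdeg_def by (simp add: sum.distrib)
  also have "\<dots> = (\<Sum>k<n. v k + (if k = j then 1 else 0))"
  proof (rule sum.cong)
    fix k show "mexch v i j k + (if k = i then 1 else 0) = v k + (if k = j then 1 else 0)"
      unfolding mexch_def using assms(3) by (cases "k = i"; cases "k = j") simp_all
  qed simp
  also have "\<dots> = mdeg n v + 1" using assms by (simp add: sum.distrib mdeg_def)
  finally show ?thesis by simp
qed

lemma mexch_in_monomials: "v \<in> monomials n \<Longrightarrow> j < n \<Longrightarrow> mexch v i j \<in> monomials n"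
  by (auto simp: monomials_def mexch_def)

lemma exists_mdvd_between_of_mdeg:
  assumes "u \<in> monomials n" "b \<in> monomials n" "mdvd u b" "mdeg n u + k \<le> mdeg n b"
  shows "\<exists>w \<in> monomials n. mdvd u w \<and> mdvd w b \<and> mdeg n w = mdeg n u + k"
  using assms(4)
proof (induction k)
  case 0
  thus ?case using assms by (auto simp: mdvd_def)
next
  case (Suc k)
  then obtain w where w: "w \<in> monomials n" "mdvd u w" "mdvd w b" "mdeg n w = mdeg n u + k"
    by auto
  have "\<exists>m<n. w m < b m"
  proof (rule ccontr)
    assume "\<not> ?thesis"
    hence "\<forall>m<n. w m = b m" using w(3) unfolding mdvd_def by (meson le_antisym not_less)
    hence "mdeg n w = mdeg n b" unfolding mdeg_def by simp
    with Suc.prems w(4) show False by simp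
  qed
  then obtain m where m: "m < n" "w m < b m" by auto
  let ?w = "w(m := Suc (w m))"
  have "?w \<in> monomials n" using w(1) m by (auto simp: monomials_def)
  moreover have "mdvd u ?w" "mdvd ?w b" using w(2,3) m by (auto simp: mdvd_def le_Suc_eq)
  moreover have "mdeg n ?w = mdeg n u + Suc k" using mdeg_fun_upd_Suc[OF m(1)] w(4) by simp
  ultimately show ?case by blast
qed

lemma exists_multiple_same_mdeg_below_lcm:
  assumes um: "u \<in> monomials n" and vm: "v \<in> monomials n"
    and deg: "mdeg n u \<le> mdeg n v" and nd: "\<not> mdvd u v"
    and i: "i < n" and vi: "u i < v i"
  shows "\<exists>w\<in>monomials n. mdvd u w \<and> mdeg n w = mdeg n v \<and> w i < v i \<and>
           (\<forall>j. v j < w j \<longrightarrow> v j < u j)"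
proof -
  obtain k where k: "v k < u k" using nd by (auto simp: mdvd_def not_le)
  have kn: "k < n" using k um by (auto simp: monomials_def intro: ccontr)
  have ki: "k \<noteq> i" using k vi by auto
  \<comment> \<open>b = lcm(u, v)/x_i; it is divisible by x_k (v/x_i), hence has degree at least deg v.\<close>
  define b where "b = (\<lambda>j. if j = i then v i - 1 else max (u j) (v j))"
  have bm: "b \<in> monomials n" using um vm i by (auto simp: b_def monomials_def)
  have ub: "mdvd u b" using vi by (auto simp: b_def mdvd_def)
  have "mdvd (mexch v i k) b" using k ki by (auto simp: mdvd_def mexch_def b_def)
  hence "mdeg n v \<le> mdeg n b"
    using mdeg_mono[of "mexch v i k" b n] mdeg_mexch[OF i kn, of v] vi by simp
  hence "mdeg n u + (mdeg n v - mdeg n u) \<le> mdeg n b" using deg by simp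
  from exists_mdvd_between_of_mdeg[OF um bm ub this] obtain w where
    w: "w \<in> monomials n" "mdvd u w" "mdvd w b" "mdeg n w = mdeg n v"
    using deg by auto
  have "w i \<le> b i" using w(3) by (simp add: mdvd_def)
  hence "w i \<le> v i - 1" by (simp add: b_def)
  hence "w i < v i" using vi by simp
  moreover have "v j < u j" if "v j < w j" for j
  proof -
    have "w j \<le> b j" using w(3) by (simp add: mdvd_def)
    thus ?thesis using that vi by (auto simp: b_def split: if_splits)
  qed
  ultimately show ?thesis using w by blast
qed

lemma component_subset: "monomial_ideal n I \<Longrightarrow> component n I d \<subseteq> I"
  by (auto simp: component_def ideal_gen_def monomial_ideal_def)

lemma in_component:
  "u \<in> I \<Longrightarrow> u \<in> monomials n \<Longrightarrow> mdeg n u = d \<Longrightarrow> u \<in> component n I d"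
  by (auto simp: component_def ideal_gen_def mdvd_def)

lemma mgens_component:
  assumes "monomial_ideal n I"
  shows "mgens (component n I d) = {u \<in> I. mdeg n u = d}"
proof (intro set_eqI iffI)
  fix u assume u: "u \<in> mgens (component n I d)"
  then obtain z where z: "z \<in> I" "mdeg n z = d" "mdvd z u"
    by (auto simp: mgens_def component_def ideal_gen_def)
  have "z \<in> component n I d" using z assms in_component by (auto simp: monomial_ideal_def)
  hence "z = u" using u z(3) by (auto simp: mgens_def)
  thus "u \<in> {u \<in> I. mdeg n u = d}" using z by auto
next
  fix u assume u: "u \<in> {u \<in> I. mdeg n u = d}"
  have um: "u \<in> monomials n" using u assms by (auto simp: monomial_ideal_def)
  show "u \<in> mgens (component n I d)" unfolding mgens_def
  proof (intro CollectI conjI in_component ballI impI)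
    fix w assume w: "w \<in> component n I d" "mdvd w u"
    then obtain z where z: "z \<in> I" "mdeg n z = d" "mdvd z w"
      by (auto simp: component_def ideal_gen_def)
    have zm: "z \<in> monomials n" using z assms by (auto simp: monomial_ideal_def)
    have "mdvd z u" using z(3) w(2) unfolding mdvd_def using le_trans by blast
    hence "z = u" using mdvd_mdeg_eq_imp_eq[OF zm um] z u by auto
    thus "w = u" using z(3) w(2) unfolding mdvd_def by (metis le_antisym ext)
  qed (use u um in auto)
qed

lemma componentwise_polymatroidal_imp_exchange:
  assumes I: "monomial_ideal n I" and cp: "componentwise_polymatroidal n I"
    and u: "u \<in> I" and v: "v \<in> I" and deg: "mdeg n u \<le> mdeg n v" and nd: "\<not> mdvd u v"
    and i: "i < n" and vi: "u i < v i"
  shows "\<exists>j<n. v j < u j \<and> mexch v i j \<in> I"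
proof -
  have um: "u \<in> monomials n" and vm: "v \<in> monomials n"
    using u v I by (auto simp: monomial_ideal_def)
  obtain w where w: "w \<in> monomials n" "mdvd u w" "mdeg n w = mdeg n v" "w i < v i"
    and w_above_v: "\<And>j. v j < w j \<Longrightarrow> v j < u j"
    using exists_multiple_same_mdeg_below_lcm[OF um vm deg nd i vi] by blast
  let ?C = "component n I (mdeg n v)"
  have "w \<in> I" using I u w by (auto simp: monomial_ideal_def)
  hence gens: "w \<in> mgens ?C" "v \<in> mgens ?C" using mgens_component[OF I] w v by auto
  hence "polymatroidal n ?C"
    using cp by (auto simp: componentwise_polymatroidal_def mgens_def)
  then obtain j where "j < n" "v j < w j" "mexch v i j \<in> ?C"
    using gens i w(4) unfolding polymatroidal_def by blast
  thus ?thesis using w_above_v component_subset[OF I] by blast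
qed

lemma exchange_imp_componentwise_polymatroidal:
  assumes I: "monomial_ideal n I"
    and exch: "\<And>u v i. u \<in> I \<Longrightarrow> v \<in> I \<Longrightarrow> mdeg n u \<le> mdeg n v \<Longrightarrow> \<not> mdvd u v \<Longrightarrow>
                 i < n \<Longrightarrow> u i < v i \<Longrightarrow> \<exists>j<n. v j < u j \<and> mexch v i j \<in> I"
  shows "componentwise_polymatroidal n I"
  unfolding componentwise_polymatroidal_def polymatroidal_def
proof (intro allI impI conjI ballI)
  fix d
  show "\<exists>d'. \<forall>u\<in>mgens (component n I d). mdeg n u = d'"
    using mgens_component[OF I] by auto
  fix u v i assume "u \<in> mgens (component n I d)" "v \<in> mgens (component n I d)"
    and i: "i < n" and ui: "v i < u i"
  hence u: "u \<in> I" "mdeg n u = d" and v: "v \<in> I" "mdeg n v = d"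
    using mgens_component[OF I] by auto
  have um: "u \<in> monomials n" and vm: "v \<in> monomials n"
    using u v I by (auto simp: monomial_ideal_def)
  have "\<not> mdvd v u"
    using mdvd_mdeg_eq_imp_eq[OF vm um] u v ui by auto
  then obtain j where j: "j < n" "u j < v j" "mexch u i j \<in> I"
    using exch[OF v(1) u(1) _ _ i ui] u v by auto
  have "mexch u i j \<in> component n I d"
    using in_component[OF j(3) mexch_in_monomials[OF um j(1)]] mdeg_mexch[OF i j(1)] ui u
    by simp
  thus "\<exists>j<n. u j < v j \<and> mexch u i j \<in> component n I d" using j by blast
qed

theorem proposition1p2:
  fixes n :: nat and I :: "(nat \<Rightarrow> nat) set"
  assumes "monomial_ideal n I"
  shows "componentwise_polymatroidal n I \<longleftrightarrow>
    (\<forall>u\<in>I. \<forall>v\<in>I. mdeg n u \<le> mdeg n v \<and> \<not> mdvd u v \<longrightarrow>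
       (\<forall>i<n. v i > u i \<longrightarrow> (\<exists>j<n. v j < u j \<and> mexch v i j \<in> I)))"
  using componentwise_polymatroidal_imp_exchange[OF assms]
    exchange_imp_componentwise_polymatroidal[OF assms]
  by blast

end
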